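(* Let $0<\beta<1$, $p=\lceil\beta^{-1}\rceil-1$, and let $G$ be a graph of order $n$ with minimum degree $(1-\beta)n$. Then for all integers $2\le t<s\le p+1$ and every $S\in\mathcal{K}_s$, $$\Phi_t^s(S)\ \ge\ (1-t\beta)\frac{s!}{t!}+\big(D_-(S)-(1-s\beta)\big)\frac{(s-2)!}{(t-2)!}.$$ In particular, for $2\le t\le p$, $$\sum_{S\in\mathcal{K}_{p+1}}\Phi_t^{p+1}(S)\ \ge\ \left((1-t\beta)\frac{(p+1)!}{t!}-(1-(p+1)\beta)\frac{(p-1)!}{(t-2)!}\right)k_{p+1}.$$
   Context: All graphs are finite and simple. For a graph $G$, $\mathcal{K}_t$ is the set of $t$-cliques (identified with vertex sets), $k_t=|\mathcal{K}_t|$, and $\mathcal{K}_t(S)$ is the set of $t$-cliques contained in a clique $S$. The degree $d(T)$ of a clique $T$ is the number of cliques with one more vertex containing $T$, and $D(T)=d(T)/n$. With $p=\lceil\beta^{-1}\rceil-1$, for $T\in\mathcal{K}_t$, $1\le t\le p+1$, $D_-(T)=\min\{D(T),(p-t+1)\beta\}$. For integers $2\le t\le s\le p+1$ define $\phi_t^s:\mathcal{K}_s\to\mathbb{R}$ recursively by $\phi_t^t(S)=D_-(S)$ and $\phi_t^s(S)=\sum_{U\in\mathcal{K}_{s-1}(S)}\phi_t^{s-1}(U)$ for $s>t$; set $\varphi_t^s=(1-t\beta)\frac{s!}{t!}+((p+1)\beta-1)\frac{(s-2)!}{(t-2)!}$ and $\Phi_t^s(S)=\min\{\phi_t^s(S),\varphi_t^s\}$.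 *)

theory Defs
  imports Main "HOL-Library.Discrete_Functions" Complex_Main
begin

definition simple_graph :: "'a set \<Rightarrow> ('a \<Rightarrow> 'a \<Rightarrow> bool) \<Rightarrow> bool" where
  "simple_graph V E \<longleftrightarrow> finite V \<and> (\<forall>u v. E u v \<longrightarrow> u \<in> V \<and> v \<in> V)
      \<and> (\<forall>u v. E u v \<longrightarrow> E v u) \<and> (\<forall>v. \<not> E v v)"

definition vdeg :: "'a set \<Rightarrow> ('a \<Rightarrow> 'a \<Rightarrow> bool) \<Rightarrow> 'a \<Rightarrow> nat" where
  "vdeg V E v = card {u \<in> V. E v u}"

definition min_degree :: "'a set \<Rightarrow> ('a \<Rightarrow> 'a \<Rightarrow> bool) \<Rightarrow> nat" where
  "min_degree V E = Min (vdeg V E ` V)"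

definition is_clique :: "'a set \<Rightarrow> ('a \<Rightarrow> 'a \<Rightarrow> bool) \<Rightarrow> 'a set \<Rightarrow> bool" where
  "is_clique V E S \<longleftrightarrow> S \<subseteq> V \<and> (\<forall>u\<in>S. \<forall>v\<in>S. u \<noteq> v \<longrightarrow> E u v)"

definition cliques :: "'a set \<Rightarrow> ('a \<Rightarrow> 'a \<Rightarrow> bool) \<Rightarrow> nat \<Rightarrow> 'a set set" where
  "cliques V E t = {S. is_clique V E S \<and> finite S \<and> card S = t}"

definition cliques_in :: "'a set \<Rightarrow> ('a \<Rightarrow> 'a \<Rightarrow> bool) \<Rightarrow> nat \<Rightarrow> 'a set \<Rightarrow> 'a set set" where
  "cliques_in V E t S = {U \<in> cliques V E t. U \<subseteq> S}"

definition cdeg :: "'a set \<Rightarrow> ('a \<Rightarrow> 'a \<Rightarrow> bool) \<Rightarrow> 'a set \<Rightarrow> nat" where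
  "cdeg V E T = card {U \<in> cliques V E (card T + 1). T \<subseteq> U}"

definition cD :: "'a set \<Rightarrow> ('a \<Rightarrow> 'a \<Rightarrow> bool) \<Rightarrow> 'a set \<Rightarrow> real" where
  "cD V E T = real (cdeg V E T) / real (card V)"

definition pp :: "real \<Rightarrow> nat" where
  "pp \<beta> = nat (\<lceil>1 / \<beta>\<rceil> - 1)"

definition Dminus :: "'a set \<Rightarrow> ('a \<Rightarrow> 'a \<Rightarrow> bool) \<Rightarrow> real \<Rightarrow> 'a set \<Rightarrow> real" where
  "Dminus V E \<beta> T = min (cD V E T) ((real (pp \<beta>) - real (card T) + 1) * \<beta>)"

text \<open>phi_aux k S = phi_t^{t+k}(S) for S a (t+k)-clique.\<close>
fun phi_aux :: "'a set \<Rightarrow> ('a \<Rightarrow> 'a \<Rightarrow> bool) \<Rightarrow> real \<Rightarrow> nat \<Rightarrow> nat \<Rightarrow> 'a set \<Rightarrow> real" where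
  "phi_aux V E \<beta> t 0 S = Dminus V E \<beta> S"
| "phi_aux V E \<beta> t (Suc k) S =
     (\<Sum>U\<in>cliques_in V E (t + k) S. phi_aux V E \<beta> t k U)"

definition phi :: "'a set \<Rightarrow> ('a \<Rightarrow> 'a \<Rightarrow> bool) \<Rightarrow> real \<Rightarrow> nat \<Rightarrow> nat \<Rightarrow> 'a set \<Rightarrow> real" where
  "phi V E \<beta> t s S = phi_aux V E \<beta> t (s - t) S"

definition varphi :: "real \<Rightarrow> nat \<Rightarrow> nat \<Rightarrow> real" where
  "varphi \<beta> t s = (1 - real t * \<beta>) * (fact s / fact t)
      + ((real (pp \<beta>) + 1) * \<beta> - 1) * (fact (s - 2) / fact (t - 2))"

definition Phi :: "'a set \<Rightarrow> ('a \<Rightarrow> 'a \<Rightarrow> bool) \<Rightarrow> real \<Rightarrow> nat \<Rightarrow> nat \<Rightarrow> 'a set \<Rightarrow> real" where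
  "Phi V E \<beta> t s S = min (phi V E \<beta> t s S) (varphi \<beta> t s)"

end

theory Submission
  imports Defs
begin

(* For a clique T let N(T) be its common neighbourhood, so that d(T) = |N(T)|.  The heart of
   the argument is a one-step inequality (Dminus_facet_sum): for an m-clique S with m >= 2,
       sum_{v in S} D_-(S - v) >= (m - 2) D_-(S) + 2 - m beta.
   It comes from a double count over the vertices of G (vertex_incidence_count, which yields
   facet_degree_sum_lower): for every K <= S this bounds sum_{v in S - K} D(S - v) from below.
   A purely arithmetic truncation lemma (sum_min_lower_bound), applied with K the set of
   facets whose degree exceeds the cap of D_-, turns these bounds into the inequality for D_-.

   Unfolding the recursion phi_t^{s+1}(S) = sum_{v in S} phi_t^s(S - v) and inducting on
   s - t then gives phi_t^s(S) >= phi_bound t s (D_-(S)) (phi_lower), where phi_bound is the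
   right-hand side of the theorem; the cap varphi_t^s dominates the same bound because
   D_-(S) <= (p - s + 1) beta (Phi_lower).  For (p + 1)-cliques D_-(S) = 0, and summing over
   all of them gives the second claim. *)

section \<open>Arithmetic preliminaries\<close>

text \<open>The set \<open>K\<close> to use
  is that of the truncated terms.\<close>
lemma sum_min_lower_bound:
  fixes S :: "'b set" and x :: "'b \<Rightarrow> real"
  assumes fin: "finite S" and cS: "card S = m" and cge: "c \<ge> 1 - real m * \<beta>"
    and partial: "\<And>K. K \<subseteq> S \<Longrightarrow>
      (\<Sum>v\<in>S-K. x v) \<ge> 2 + (real (card (S-K)) - 2) * D - (real m + real (card K)) * \<beta>"
    and pointwise: "\<And>u. u \<in> S \<Longrightarrow> x u \<ge> 1 - (real m - 1) * \<beta>"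
  shows "(\<Sum>v\<in>S. min (x v) (c + \<beta>)) \<ge> (real m - 2) * min D c + 2 - real m * \<beta>"
proof -
  define K where "K = {v\<in>S. c + \<beta> < x v}"
  have KS: "K \<subseteq> S" by (auto simp: K_def)
  have finK: "finite K" using fin KS finite_subset by blast
  define k where "k = card K"
  have km: "k \<le> m" using card_mono[OF fin KS] cS k_def by simp
  have cSK: "real (card (S - K)) = real m - real k"
    using card_Diff_subset[OF finK KS] km cS k_def by simp
  have split: "(\<Sum>v\<in>S. min (x v) (c + \<beta>)) = (\<Sum>v\<in>S-K. x v) + real k * (c + \<beta>)"
  proof -
    have "(\<Sum>v\<in>S. min (x v) (c + \<beta>))
        = (\<Sum>v\<in>S-K. min (x v) (c + \<beta>)) + (\<Sum>v\<in>K. min (x v) (c + \<beta>))"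
      by (rule sum.subset_diff[OF KS fin])
    also have "(\<Sum>v\<in>S-K. min (x v) (c + \<beta>)) = (\<Sum>v\<in>S-K. x v)"
      by (intro sum.cong) (auto simp: K_def)
    also have "(\<Sum>v\<in>K. min (x v) (c + \<beta>)) = (\<Sum>v\<in>K. c + \<beta>)"
      by (intro sum.cong) (auto simp: K_def)
    finally show ?thesis by (simp add: k_def)
  qed
  have HK: "(\<Sum>v\<in>S-K. x v) \<ge> 2 + (real m - real k - 2) * D - (real m + real k) * \<beta>"
    using partial[OF KS] cSK k_def by simp
  have LK: "(\<Sum>v\<in>S-K. x v) \<ge> (real m - real k) * (1 - (real m - 1) * \<beta>)"
  proof -
    have "(\<Sum>v\<in>S-K. x v) \<ge> (\<Sum>v\<in>S-K. 1 - (real m - 1) * \<beta>)"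
      by (intro sum_mono pointwise) auto
    thus ?thesis using cSK by simp
  qed
  show ?thesis
  proof (cases "D \<le> c")
    case True
    hence "real k * (c - D) \<ge> 0" by simp
    thus ?thesis using True split HK by (simp add: algebra_simps)
  next
    case False
    hence mc: "min D c = c" by simp
    consider "k + 2 \<le> m" | "k + 1 = m" | "k = m" using km by linarith
    then show ?thesis
    proof cases
      case 1
      hence "(real m - real k - 2) * (D - c) \<ge> 0" using False by simp
      thus ?thesis using split HK mc by (simp add: algebra_simps)
    next
      case 2
      hence m_eq: "real m = real k + 1" by linarith
      show ?thesis using split LK mc cge unfolding m_eq by (simp add: algebra_simps)
    next
      case 3
      thus ?thesis using split mc cge LK by (simp add: algebra_simps)
    qed
  qed
qed

lemma pp_times_beta_ge: assumes "0 < \<beta>" shows "(real (pp \<beta>) + 1) * \<beta> \<ge> 1"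
proof -
  have c1: "\<lceil>1/\<beta>\<rceil> \<ge> 1" using assms by simp
  have "real (pp \<beta>) + 1 \<ge> 1/\<beta>"
    using c1 le_of_int_ceiling[of "1/\<beta>"] by (simp add: pp_def)
  hence "(real (pp \<beta>) + 1) * \<beta> \<ge> (1/\<beta>) * \<beta>" using assms by (intro mult_right_mono) auto
  thus ?thesis using assms by simp
qed

definition phi_bound :: "real \<Rightarrow> nat \<Rightarrow> nat \<Rightarrow> real \<Rightarrow> real" where
  "phi_bound \<beta> t s D = (1 - real t * \<beta>) * (fact s / fact t)
     + (D - (1 - real s * \<beta>)) * (fact (s - 2) / fact (t - 2))"

lemma phi_bound_sum:
  fixes y :: "'b \<Rightarrow> real"
  assumes cS: "card S = Suc s" and s2: "2 \<le> s"
    and step: "(\<Sum>v\<in>S. y v) \<ge> (real (Suc s) - 2) * D + 2 - real (Suc s) * \<beta>"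
  shows "(\<Sum>v\<in>S. phi_bound \<beta> t s (y v)) \<ge> phi_bound \<beta> t (Suc s) D"
proof -
  define A where "A = (1 - real t * \<beta>) * (fact s / fact t)"
  define B where "B = (fact (s - 2) / fact (t - 2) :: real)"
  have B0: "B \<ge> 0" by (simp add: B_def)
  have fact_s2: "(fact (Suc s - 2) :: real) = (real s - 1) * fact (s - 2)"
  proof -
    have "Suc s - 2 = Suc (s - 2)" "real (Suc (s - 2)) = real s - 1" using s2 by auto
    thus ?thesis by simp
  qed
  have "(\<Sum>v\<in>S. phi_bound \<beta> t s (y v)) = (\<Sum>v\<in>S. A + B * (y v - (1 - real s * \<beta>)))"
    by (simp add: phi_bound_def A_def B_def mult.commute)
  also have "\<dots> = real (Suc s) * A + B * ((\<Sum>v\<in>S. y v) - real (Suc s) * (1 - real s * \<beta>))"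
    using cS by (simp add: sum.distrib sum_subtractf right_diff_distrib sum_distrib_left)
  also have "\<dots> \<ge> real (Suc s) * A + B * ((real s - 1) * (D - (1 - real (Suc s) * \<beta>)))"
  proof -
    have "(\<Sum>v\<in>S. y v) - real (Suc s) * (1 - real s * \<beta>)
        \<ge> (real s - 1) * (D - (1 - real (Suc s) * \<beta>))"
      using step by (simp add: algebra_simps)
    thus ?thesis using B0 by (simp add: mult_left_mono)
  qed
  also have "real (Suc s) * A + B * ((real s - 1) * (D - (1 - real (Suc s) * \<beta>)))
      = phi_bound \<beta> t (Suc s) D"
  proof -
    have f1: "(1 - real t * \<beta>) * (fact (Suc s) / fact t) = real (Suc s) * A"
      by (simp add: A_def)
    have f2: "fact (Suc s - 2) / fact (t - 2) = (real s - 1) * B"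
      unfolding fact_s2 B_def by simp
    show ?thesis unfolding phi_bound_def f1 f2 by (simp add: algebra_simps)
  qed
  finally show ?thesis .
qed

section \<open>Graphs of large minimum degree\<close>

locale dense_graph =
  fixes V :: "'a set" and E :: "'a \<Rightarrow> 'a \<Rightarrow> bool" and \<beta> :: real
  assumes graph: "simple_graph V E"
    and nonempty: "V \<noteq> {}"
    and beta_pos: "0 < \<beta>"
    and mindeg: "real (min_degree V E) \<ge> (1 - \<beta>) * real (card V)"
begin

definition common_nbhd :: "'a set \<Rightarrow> 'a set" where
  "common_nbhd T = {w\<in>V. w \<notin> T \<and> (\<forall>u\<in>T. E u w)}"

definition non_nbhd :: "'a \<Rightarrow> 'a set" where
  "non_nbhd v = {w\<in>V. w \<noteq> v \<and> \<not> E v w}"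

lemma finite_V: "finite V" using graph by (simp add: simple_graph_def)
lemma sym_E: "E u v \<Longrightarrow> E v u" using graph by (simp add: simple_graph_def)
lemma irrefl_E: "\<not> E v v" using graph by (simp add: simple_graph_def)
lemma order_pos: "real (card V) > 0" using finite_V nonempty by (simp add: card_gt_0_iff)

lemma common_nbhd_subset: "common_nbhd T \<subseteq> V" by (auto simp: common_nbhd_def)
lemma non_nbhd_subset: "non_nbhd v \<subseteq> V" by (auto simp: non_nbhd_def)

lemma clique_Diff: "is_clique V E S \<Longrightarrow> is_clique V E (S - X)"
  by (auto simp: is_clique_def)

lemma card_non_nbhd_le:
  assumes "v \<in> V" shows "real (card (non_nbhd v)) \<le> \<beta> * real (card V) - 1"
proof -
  let ?nb = "{u\<in>V. E v u}"
  have V: "V = insert v (non_nbhd v \<union> ?nb)" using assms by (auto simp: non_nbhd_def)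
  have "card V = Suc (card (non_nbhd v \<union> ?nb))"
    using finite_V irrefl_E by (subst V, intro card_insert_disjoint) (auto simp: non_nbhd_def)
  also have "card (non_nbhd v \<union> ?nb) = card (non_nbhd v) + card ?nb"
    using finite_V by (intro card_Un_disjoint) (auto simp: non_nbhd_def)
  finally have "card V = Suc (card (non_nbhd v) + card ?nb)" .
  moreover have "min_degree V E \<le> card ?nb"
    unfolding min_degree_def vdeg_def using finite_V assms by (intro Min_le) auto
  ultimately show ?thesis using mindeg by (simp add: algebra_simps)
qed

lemma cdeg_eq_card_common_nbhd:
  assumes "is_clique V E T" "finite T" shows "cdeg V E T = card (common_nbhd T)"
proof -
  have eq: "{U \<in> cliques V E (card T + 1). T \<subseteq> U} = (\<lambda>w. insert w T) ` common_nbhd T"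
  proof (intro set_eqI iffI)
    fix U assume U: "U \<in> {U \<in> cliques V E (card T + 1). T \<subseteq> U}"
    hence cl: "is_clique V E U" "finite U" "card U = card T + 1" "T \<subseteq> U"
      by (auto simp: cliques_def)
    hence "card (U - T) = 1" using assms by (simp add: card_Diff_subset)
    then obtain w where w: "U - T = {w}" by (auto simp: card_Suc_eq)
    hence w_new: "w \<in> U" "w \<notin> T" and U_eq: "U = insert w T" using cl by auto
    have "w \<in> common_nbhd T" using cl w_new by (auto simp: common_nbhd_def is_clique_def)
    thus "U \<in> (\<lambda>w. insert w T) ` common_nbhd T" using U_eq by auto
  next
    fix U assume "U \<in> (\<lambda>w. insert w T) ` common_nbhd T"
    thus "U \<in> {U \<in> cliques V E (card T + 1). T \<subseteq> U}"
      using assms by (auto simp: cliques_def common_nbhd_def is_clique_def intro: sym_E)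
  qed
  have "inj_on (\<lambda>w. insert w T) (common_nbhd T)"
    by (auto simp: inj_on_def common_nbhd_def)
  thus ?thesis unfolding cdeg_def eq by (simp add: card_image)
qed

lemma cD_eq: "is_clique V E T \<Longrightarrow> finite T \<Longrightarrow> cD V E T = real (card (common_nbhd T)) / real (card V)"
  by (simp add: cD_def cdeg_eq_card_common_nbhd)

text \<open>Every vertex outside \<open>T \<union> N(T)\<close> is a non-neighbour of some vertex of \<open>T\<close>;
  hence \<open>D(T) \<ge> 1 - |T| \<beta>\<close>.\<close>
lemma cD_lower:
  assumes "is_clique V E T" "finite T"
  shows "cD V E T \<ge> 1 - real (card T) * \<beta>"
proof -
  have "V \<subseteq> common_nbhd T \<union> T \<union> (\<Union>u\<in>T. non_nbhd u)"
    by (auto simp: common_nbhd_def non_nbhd_def)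
  hence "card V \<le> card (common_nbhd T \<union> T \<union> (\<Union>u\<in>T. non_nbhd u))"
    using finite_V assms by (intro card_mono) (auto simp: common_nbhd_def non_nbhd_def)
  also have "\<dots> \<le> card (common_nbhd T) + card T + card (\<Union>u\<in>T. non_nbhd u)"
    by (meson card_Un_le add_le_mono order_trans order_refl)
  also have "card (\<Union>u\<in>T. non_nbhd u) \<le> (\<Sum>u\<in>T. card (non_nbhd u))"
    using assms(2) by (rule card_UN_le)
  finally have "real (card V)
      \<le> real (card (common_nbhd T)) + real (card T) + (\<Sum>u\<in>T. real (card (non_nbhd u)))"
    by (simp add: of_nat_sum[symmetric] del: of_nat_sum)
  also have "(\<Sum>u\<in>T. real (card (non_nbhd u))) \<le> (\<Sum>u\<in>T. \<beta> * real (card V) - 1)"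
    using assms(1) by (intro sum_mono card_non_nbhd_le) (auto simp: is_clique_def)
  finally have "real (card (common_nbhd T)) \<ge> (1 - real (card T) * \<beta>) * real (card V)"
    by (simp add: algebra_simps)
  thus ?thesis using assms order_pos by (simp add: cD_eq pos_le_divide_eq)
qed

subsection \<open>Double counting around a clique\<close>

lemma card_ge_1: "finite A \<Longrightarrow> x \<in> A \<Longrightarrow> 1 \<le> card A"
  by (auto simp: Suc_le_eq card_gt_0_iff)

text \<open>The local count at a single vertex \<open>w\<close>, for a clique \<open>S\<close> and \<open>K \<subseteq> S\<close>:
  a vertex of \<open>S - K\<close> lies in the common neighbourhood of its own facet, a vertex of
  \<open>N(S)\<close> lies in that of every facet, and a vertex outside \<open>S \<union> N(S)\<close> is
  counted at least twice among facet neighbourhoods and non-neighbourhoods.\<close>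
lemma vertex_incidence_count:
  assumes S: "is_clique V E S" "finite S" and K: "K \<subseteq> S" and w: "w \<in> V"
  shows "card {v\<in>S-K. w \<in> common_nbhd (S-{v})} + card {v\<in>S. w \<in> non_nbhd v}
           + card {v\<in>K. w \<in> non_nbhd v}
     \<ge> of_bool (w \<in> S-K) + card (S-K) * of_bool (w \<in> common_nbhd S)
           + 2 * of_bool (w \<in> V - (S \<union> common_nbhd S))"
proof -
  have finK: "finite K" using K S finite_subset by blast
  consider (inS) "w \<in> S" | (inN) "w \<notin> S" "w \<in> common_nbhd S"
    | (out) "w \<notin> S" "w \<notin> common_nbhd S" by blast
  then show ?thesis
  proof cases
    case inS
    have "w \<notin> common_nbhd S" using inS by (auto simp: common_nbhd_def)
    moreover have "1 \<le> card {v\<in>S-K. w \<in> common_nbhd (S-{v})}" if "w \<in> S - K"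
      using S w that by (intro card_ge_1[of _ w]) (auto simp: common_nbhd_def is_clique_def)
    ultimately show ?thesis using inS by (cases "w \<in> S - K") simp_all
  next
    case inN
    have "{v\<in>S-K. w \<in> common_nbhd (S-{v})} = S - K" using inN by (auto simp: common_nbhd_def)
    thus ?thesis using inN by simp
  next
    case out
    then obtain u where u: "u \<in> S" "\<not> E u w" using w by (auto simp: common_nbhd_def)
    have unn: "w \<in> non_nbhd u" using u out w by (auto simp: non_nbhd_def)
    have c1: "1 \<le> card {v\<in>S. w \<in> non_nbhd v}"
      using S u unn by (intro card_ge_1[of _ u]) auto
    consider (two) u' where "u' \<in> S" "u' \<noteq> u" "\<not> E u' w"
      | (inK) "\<forall>u'\<in>S. u' \<noteq> u \<longrightarrow> E u' w" "u \<in> K"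
      | (notK) "\<forall>u'\<in>S. u' \<noteq> u \<longrightarrow> E u' w" "u \<notin> K" by blast
    then show ?thesis
    proof cases
      case two
      hence "{u, u'} \<subseteq> {v\<in>S. w \<in> non_nbhd v}" using unn u out w by (auto simp: non_nbhd_def)
      hence "card {u, u'} \<le> card {v\<in>S. w \<in> non_nbhd v}" using S by (intro card_mono) auto
      thus ?thesis using two out w by simp
    next
      case inK
      hence "1 \<le> card {v\<in>K. w \<in> non_nbhd v}"
        using finK unn by (intro card_ge_1[of _ u]) auto
      thus ?thesis using c1 out w by simp
    next
      case notK
      have "w \<in> common_nbhd (S - {u})" using notK out w by (auto simp: common_nbhd_def)
      hence "1 \<le> card {v\<in>S-K. w \<in> common_nbhd (S-{v})}"
        using S u notK by (intro card_ge_1[of _ u]) auto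
      thus ?thesis using c1 out w by simp
    qed
  qed
qed

lemma facet_incidence_sum:
  assumes S: "is_clique V E S" "finite S" and K: "K \<subseteq> S"
  shows "(\<Sum>v\<in>S-K. card (common_nbhd (S-{v}))) + (\<Sum>v\<in>S. card (non_nbhd v))
           + (\<Sum>v\<in>K. card (non_nbhd v))
     \<ge> 2 * card (V - (S \<union> common_nbhd S)) + card (S-K) * (card (common_nbhd S) + 1)"
proof -
  have SV: "S \<subseteq> V" using S by (simp add: is_clique_def)
  have finK: "finite K" using K S finite_subset by blast
  have swap: "(\<Sum>v\<in>A. card (F v)) = (\<Sum>w\<in>V. card {v\<in>A. w \<in> F v})"
    if "finite A" "\<And>v. F v \<subseteq> V" for A and F :: "'a \<Rightarrow> 'a set"
  proof -
    have "(\<Sum>v\<in>A. card (F v)) = (\<Sum>v\<in>A. card {w\<in>V. w \<in> F v})"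
      using that(2) by (intro sum.cong) (auto intro!: arg_cong[where f=card])
    also have "\<dots> = (\<Sum>w\<in>V. card {v\<in>A. w \<in> F v})"
      using that(1) finite_V by (intro sum_multicount_gen) auto
    finally show ?thesis .
  qed
  have "(\<Sum>w\<in>V. of_bool (w \<in> S-K) + card (S-K) * of_bool (w \<in> common_nbhd S)
          + 2 * of_bool (w \<in> V - (S \<union> common_nbhd S)))
     \<le> (\<Sum>w\<in>V. card {v\<in>S-K. w \<in> common_nbhd (S-{v})} + card {v\<in>S. w \<in> non_nbhd v}
          + card {v\<in>K. w \<in> non_nbhd v})"
    by (intro sum_mono vertex_incidence_count[OF S K]) auto
  also have "\<dots> = (\<Sum>v\<in>S-K. card (common_nbhd (S-{v}))) + (\<Sum>v\<in>S. card (non_nbhd v))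
          + (\<Sum>v\<in>K. card (non_nbhd v))"
    using S finK by (simp add: sum.distrib swap common_nbhd_subset non_nbhd_subset)
  also have "(\<Sum>w\<in>V. of_bool (w \<in> S-K) + card (S-K) * of_bool (w \<in> common_nbhd S)
          + 2 * of_bool (w \<in> V - (S \<union> common_nbhd S)))
      = card (S-K) + card (S-K) * card (common_nbhd S) + 2 * card (V - (S \<union> common_nbhd S))"
  proof -
    have "V \<inter> {w\<in>S. w \<notin> K} = S - K" "V \<inter> common_nbhd S = common_nbhd S"
      "V \<inter> {w. w \<notin> S \<and> w \<notin> common_nbhd S} = V - (S \<union> common_nbhd S)"
      using SV common_nbhd_subset by auto
    thus ?thesis using finite_V by (simp add: sum.distrib sum_distrib_left[symmetric])
  qed
  finally show ?thesis by (simp add: algebra_simps)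
qed

text \<open>The resulting bound on the degrees of the facets \<open>S - v\<close>, \<open>v \<in> S - K\<close>:
  the non-neighbourhood terms are at most \<open>\<beta> n - 1\<close> each.\<close>
lemma facet_degree_sum_lower:
  assumes S: "S \<in> cliques V E m" and K: "K \<subseteq> S"
  shows "(\<Sum>v\<in>S-K. cD V E (S-{v}))
     \<ge> 2 + (real (card (S-K)) - 2) * cD V E S - (real m + real (card K)) * \<beta>"
proof -
  have cl: "is_clique V E S" "finite S" "card S = m" using S by (auto simp: cliques_def)
  have SV: "S \<subseteq> V" using cl by (simp add: is_clique_def)
  have finK: "finite K" using K cl finite_subset by blast
  define n where "n = real (card V)"
  define l where "l = real (card (S-K))"
  define k where "k = real (card K)"
  define d where "d = real (card (common_nbhd S))"
  have n0: "n > 0" using order_pos n_def by simp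
  have lk: "l + k = real m" using card_Diff_subset[OF finK K] card_mono[OF cl(2) K] cl
    by (simp add: l_def k_def)
  have outside: "real (card (V - (S \<union> common_nbhd S))) = n - real m - d"
  proof -
    have sub: "S \<union> common_nbhd S \<subseteq> V" using SV common_nbhd_subset by auto
    have "card (S \<union> common_nbhd S) = m + card (common_nbhd S)"
      using cl finite_V common_nbhd_subset
      by (subst card_Un_disjoint) (auto simp: common_nbhd_def intro: finite_subset)
    moreover have "card (S \<union> common_nbhd S) \<le> card V" using card_mono[OF finite_V sub] .
    moreover have "card (V - (S \<union> common_nbhd S)) = card V - card (S \<union> common_nbhd S)"
      using finite_V sub by (meson card_Diff_subset finite_subset)
    ultimately show ?thesis by (simp add: n_def d_def)
  qed
  have non_nbhd_sum: "(\<Sum>v\<in>A. real (card (non_nbhd v))) \<le> real (card A) * (\<beta> * n - 1)"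
    if "A \<subseteq> S" for A
  proof -
    have "(\<Sum>v\<in>A. real (card (non_nbhd v))) \<le> (\<Sum>v\<in>A. \<beta> * n - 1)"
      unfolding n_def using SV that by (intro sum_mono card_non_nbhd_le) auto
    thus ?thesis by simp
  qed
  have "2 * real (card (V - (S \<union> common_nbhd S))) + l * (d + 1)
      \<le> (\<Sum>v\<in>S-K. real (card (common_nbhd (S-{v})))) + (\<Sum>v\<in>S. real (card (non_nbhd v)))
          + (\<Sum>v\<in>K. real (card (non_nbhd v)))"
  proof -
    have "real (2 * card (V - (S \<union> common_nbhd S)) + card (S-K) * (card (common_nbhd S) + 1))
        \<le> real ((\<Sum>v\<in>S-K. card (common_nbhd (S-{v}))) + (\<Sum>v\<in>S. card (non_nbhd v))
          + (\<Sum>v\<in>K. card (non_nbhd v)))"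
      using facet_incidence_sum[OF cl(1,2) K] by (simp only: of_nat_le_iff)
    thus ?thesis by (simp add: l_def d_def algebra_simps)
  qed
  hence "(\<Sum>v\<in>S-K. real (card (common_nbhd (S-{v}))))
      \<ge> 2 * (n - real m - d) + l * (d + 1) - real m * (\<beta> * n - 1) - k * (\<beta> * n - 1)"
    using outside non_nbhd_sum[OF order_refl] non_nbhd_sum[OF K] cl(3) unfolding k_def by simp
  also have "2 * (n - real m - d) + l * (d + 1) - real m * (\<beta> * n - 1) - k * (\<beta> * n - 1)
      = (2 + (l - 2) * (d / n) - (real m + k) * \<beta>) * n"
    using n0 by (simp add: field_simps flip: lk)
  finally have "(\<Sum>v\<in>S-K. real (card (common_nbhd (S-{v})))) / n
      \<ge> 2 + (l - 2) * (d / n) - (real m + k) * \<beta>"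
    using n0 by (simp add: pos_le_divide_eq)
  moreover have "(\<Sum>v\<in>S-K. cD V E (S-{v})) = (\<Sum>v\<in>S-K. real (card (common_nbhd (S-{v})))) / n"
    using cl clique_Diff[OF cl(1)] by (simp add: cD_eq n_def sum_divide_distrib)
  ultimately show ?thesis using cl by (simp add: cD_eq l_def k_def d_def n_def)
qed

lemma Dminus_facet_sum:
  assumes S: "S \<in> cliques V E m" and m2: "2 \<le> m"
  shows "(\<Sum>v\<in>S. Dminus V E \<beta> (S-{v})) \<ge> (real m - 2) * Dminus V E \<beta> S + 2 - real m * \<beta>"
proof -
  have cl: "is_clique V E S" "finite S" "card S = m" using S by (auto simp: cliques_def)
  define c where "c = (real (pp \<beta>) - real m + 1) * \<beta>"
  have facet_card: "real (card (S-{v})) = real m - 1" if "v \<in> S" for v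
    using cl that m2 by simp
  have facet_Dminus: "Dminus V E \<beta> (S-{v}) = min (cD V E (S-{v})) (c + \<beta>)" if "v \<in> S" for v
    unfolding Dminus_def facet_card[OF that] c_def by (simp add: algebra_simps)
  have "c \<ge> 1 - real m * \<beta>"
    using pp_times_beta_ge[OF beta_pos] by (simp add: c_def algebra_simps)
  moreover have "cD V E (S-{u}) \<ge> 1 - (real m - 1) * \<beta>" if "u \<in> S" for u
    using cD_lower[OF clique_Diff[OF cl(1)], of "{u}"] cl facet_card[OF that] by simp
  ultimately have "(\<Sum>v\<in>S. min (cD V E (S-{v})) (c + \<beta>))
      \<ge> (real m - 2) * min (cD V E S) c + 2 - real m * \<beta>"
    using sum_min_lower_bound[OF cl(2,3)] facet_degree_sum_lower[OF S] by blast
  moreover have "(\<Sum>v\<in>S. Dminus V E \<beta> (S-{v})) = (\<Sum>v\<in>S. min (cD V E (S-{v})) (c + \<beta>))"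
    by (rule sum.cong) (simp_all add: facet_Dminus)
  ultimately show ?thesis using cl by (simp add: Dminus_def c_def)
qed

section \<open>The bound on \<open>\<phi>\<close> and \<open>\<Phi>\<close>\<close>

lemma cliques_in_facets:
  assumes S: "S \<in> cliques V E (Suc s)"
  shows "cliques_in V E s S = (\<lambda>v. S - {v}) ` S"
proof (intro set_eqI iffI)
  have cl: "is_clique V E S" "finite S" "card S = Suc s" using S by (auto simp: cliques_def)
  fix U
  { assume "U \<in> cliques_in V E s S"
    hence U: "U \<subseteq> S" "card U = s" "finite U" by (auto simp: cliques_in_def cliques_def)
    hence "card (S - U) = 1" using cl by (simp add: card_Diff_subset)
    then obtain v where "S - U = {v}" by (auto simp: card_Suc_eq)
    hence "U = S - {v}" "v \<in> S" using U by auto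
    thus "U \<in> (\<lambda>v. S - {v}) ` S" by auto }
  { assume "U \<in> (\<lambda>v. S - {v}) ` S"
    thus "U \<in> cliques_in V E s S" using cl clique_Diff[OF cl(1)]
      by (auto simp: cliques_in_def cliques_def) }
qed

lemma phi_aux_Suc_facets:
  assumes "S \<in> cliques V E (Suc (t + k))"
  shows "phi_aux V E \<beta> t (Suc k) S = (\<Sum>v\<in>S. phi_aux V E \<beta> t k (S - {v}))"
proof -
  have "inj_on (\<lambda>v. S - {v}) S" by (auto simp: inj_on_def)
  thus ?thesis using cliques_in_facets[OF assms] by (simp add: sum.reindex)
qed

lemma phi_aux_lower:
  assumes t2: "2 \<le> t"
  shows "S \<in> cliques V E (t + k) \<Longrightarrow>
    phi_aux V E \<beta> t k S \<ge> phi_bound \<beta> t (t + k) (Dminus V E \<beta> S)"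
proof (induction k arbitrary: S)
  case 0
  thus ?case by (simp add: phi_bound_def)
next
  case (Suc k)
  have S: "S \<in> cliques V E (Suc (t + k))" using Suc.prems by simp
  have cS: "card S = Suc (t + k)" using S by (simp add: cliques_def)
  have "(\<Sum>v\<in>S. phi_bound \<beta> t (t + k) (Dminus V E \<beta> (S - {v})))
      \<le> (\<Sum>v\<in>S. phi_aux V E \<beta> t k (S - {v}))"
  proof (intro sum_mono Suc.IH)
    fix v assume "v \<in> S"
    thus "S - {v} \<in> cliques V E (t + k)" using S clique_Diff by (auto simp: cliques_def)
  qed
  moreover have "(\<Sum>v\<in>S. phi_bound \<beta> t (t + k) (Dminus V E \<beta> (S - {v})))
      \<ge> phi_bound \<beta> t (Suc (t + k)) (Dminus V E \<beta> S)"
    using t2 Dminus_facet_sum[OF S] by (intro phi_bound_sum[OF cS]) auto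
  ultimately show ?case using phi_aux_Suc_facets[OF S] by simp
qed

lemma phi_lower:
  assumes "2 \<le> t" "t \<le> s" "S \<in> cliques V E s"
  shows "phi V E \<beta> t s S \<ge> phi_bound \<beta> t s (Dminus V E \<beta> S)"
  using phi_aux_lower[OF assms(1), of S "s - t"] assms by (simp add: phi_def)

text \<open>The cap \<open>\<phi>\<^sub>t\<^sup>s\<close> dominates the bound since \<open>D\<^sub>-(S) \<le> (p - s + 1) \<beta>\<close>, so the
  bound passes to \<open>\<Phi>\<^sub>t\<^sup>s\<close>.\<close>
lemma Phi_lower:
  assumes "2 \<le> t" "t \<le> s" "S \<in> cliques V E s"
  shows "Phi V E \<beta> t s S \<ge> phi_bound \<beta> t s (Dminus V E \<beta> S)"
proof -
  have "Dminus V E \<beta> S - (1 - real s * \<beta>) \<le> (real (pp \<beta>) + 1) * \<beta> - 1"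
    using assms(3) by (simp add: Dminus_def cliques_def algebra_simps)
  hence "(Dminus V E \<beta> S - (1 - real s * \<beta>)) * (fact (s - 2) / fact (t - 2))
      \<le> ((real (pp \<beta>) + 1) * \<beta> - 1) * (fact (s - 2) / fact (t - 2))"
    by (rule mult_right_mono) simp
  hence "varphi \<beta> t s \<ge> phi_bound \<beta> t s (Dminus V E \<beta> S)"
    unfolding varphi_def phi_bound_def by simp
  thus ?thesis using phi_lower[OF assms] by (simp add: Phi_def)
qed

lemma Dminus_top_clique:
  assumes "S \<in> cliques V E (pp \<beta> + 1)"
  shows "Dminus V E \<beta> S = 0"
proof -
  have "cD V E S \<ge> 0" by (simp add: cD_def)
  thus ?thesis using assms by (simp add: Dminus_def cliques_def min_def)
qed

end

theorem mainTheorem17: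
  fixes V :: "'a set" and E :: "'a \<Rightarrow> 'a \<Rightarrow> bool" and \<beta> :: real
  assumes graph: "simple_graph V E"
    and nonempty: "V \<noteq> {}"
    and beta: "0 < \<beta>" "\<beta> < 1"
    and mindeg: "real (min_degree V E) = (1 - \<beta>) * real (card V)"
  shows "(\<forall>t s S. 2 \<le> t \<and> t < s \<and> s \<le> pp \<beta> + 1 \<and> S \<in> cliques V E s \<longrightarrow>
            Phi V E \<beta> t s S \<ge> (1 - real t * \<beta>) * (fact s / fact t)
              + (Dminus V E \<beta> S - (1 - real s * \<beta>)) * (fact (s - 2) / fact (t - 2)))
       \<and> (\<forall>t. 2 \<le> t \<and> t \<le> pp \<beta> \<longrightarrow>
            (\<Sum>S\<in>cliques V E (pp \<beta> + 1). Phi V E \<beta> t (pp \<beta> + 1) S)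
              \<ge> ((1 - real t * \<beta>) * (fact (pp \<beta> + 1) / fact t)
                  - (1 - (real (pp \<beta>) + 1) * \<beta>) * (fact (pp \<beta> - 1) / fact (t - 2)))
                * real (card (cliques V E (pp \<beta> + 1))))"
proof (intro conjI allI impI; elim conjE)
  interpret dense_graph V E \<beta> using assms by unfold_locales auto
  show "Phi V E \<beta> t s S \<ge> (1 - real t * \<beta>) * (fact s / fact t)
      + (Dminus V E \<beta> S - (1 - real s * \<beta>)) * (fact (s - 2) / fact (t - 2))"
    if "2 \<le> t" "t < s" "s \<le> pp \<beta> + 1" "S \<in> cliques V E s" for t s S
    using Phi_lower[of t s S] that by (simp add: phi_bound_def)
  fix t assume t: "2 \<le> t" "t \<le> pp \<beta>"
  let ?p = "pp \<beta>"
  have "Phi V E \<beta> t (?p + 1) S \<ge> (1 - real t * \<beta>) * (fact (?p + 1) / fact t)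
      - (1 - (real ?p + 1) * \<beta>) * (fact (?p - 1) / fact (t - 2))"
    if S: "S \<in> cliques V E (?p + 1)" for S
  proof -
    have "phi_bound \<beta> t (?p + 1) 0 = (1 - real t * \<beta>) * (fact (?p + 1) / fact t)
        - (1 - (real ?p + 1) * \<beta>) * (fact (?p - 1) / fact (t - 2))"
      by (simp add: phi_bound_def numeral_2_eq_2 field_simps del: fact_Suc)
    thus ?thesis using Phi_lower[OF t(1) _ S] t Dminus_top_clique[OF S] by simp
  qed
  from sum_mono[OF this]
  show "(\<Sum>S\<in>cliques V E (?p + 1). Phi V E \<beta> t (?p + 1) S)
      \<ge> ((1 - real t * \<beta>) * (fact (?p + 1) / fact t)
          - (1 - (real ?p + 1) * \<beta>) * (fact (?p - 1) / fact (t - 2)))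
        * real (card (cliques V E (?p + 1)))"
    by (simp add: mult.commute)
qed

end
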